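(* In the standing setup, fix $\varepsilon>0$ and let $\Sigma$ be the set of subsequences $\alpha=(\alpha_n)$ of $(p_n)$ such that $\ell_n^\alpha<\frac1{12}\frac{\varepsilon}{4^n}$ for all $n$. Define $\xi:\Sigma\to\mathbb R$ by $\xi(\alpha)=\lim_{n\to\infty}\alpha_0\alpha_1\cdots\alpha_n(\infty)$ (this limit exists and is a positive real number). Then the image $\xi(\Sigma)$ is uncountable.
   Context: Standing setup: $\mathbb H$ is the upper half-plane, $\partial\mathbb H=\mathbb R\cup\{\infty\}$; for $v\in T^1\mathbb H$, $v(t)$ is the unit-speed geodesic with initial vector $v$, $v(+\infty)$ its forward endpoint. For a horocycle $\tilde H$ and a parabolic isometry $p$ preserving it, $\ell(\tilde H,p)$ is the horocyclic arc length between $x$ and $px$ ($x\in\tilde H$); positive orientation is that of an arc-length parametrization with $p\tilde H(s)=\tilde H(s+\ell(\tilde H,p))$; $\tilde u$ is tangent to the oriented pair $(\tilde H,p)$ if $\tilde u(\mathbb R^+)$ is tangent to $\tilde H$ at $\tilde u(t_0)=\tilde H(s_0)$, $t_0\ge0$, with $\frac{d\tilde u}{dt}(t_0)=\frac{d\tilde H}{ds}(s_0)$ for a positively oriented parametrization. $\Gamma$ is a torsion-free Fuchsian group, $S=\Gamma\backslash\mathbb H$ has at least one cusp, $u\in T^1S$ is cusp-recurrent with lift $\tilde u$ normalized so that $\tilde u(0)=i$, $\tilde u(+\infty)=\infty$. $(\tilde H_n,p_n)_{n\in\mathbb N}$: $p_n\in\Gamma$ parabolic with fixed point $x_n\in\mathbb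 R$, $\tilde H_n$ horocycle centered at $x_n$, $\tilde u$ tangent to the oriented pair $(\tilde H_n,p_n)$ at $\tilde u(t_n)$, $(t_n)$ nonnegative increasing to $+\infty$, $x_n$ positive distinct increasing to $+\infty$, horoballs bounded by the $\tilde H_n$ pairwise disjoint, $\ell(\tilde H_n,p_n)\to0$. A subsequence $\alpha$ is $\alpha_n=p_{k_n}$ ($k_n$ strictly increasing), $\ell_n^\alpha=\ell(\tilde H_{k_n},p_{k_n})$. *)

theory Defs
  imports "HOL-Analysis.Analysis"
begin

text \<open>Isometries of the upper half-plane are represented by matrices in SL(2,R)
  (A and -A give the same isometry, so Gamma is viewed as a subgroup of PSL(2,R)
  via its preimage in SL(2,R)).\<close>

type_synonym mat2 = "real^2^2"

definition SL2 :: "mat2 set" where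
  "SL2 = {A. det A = 1}"

definition mpow :: "mat2 \<Rightarrow> nat \<Rightarrow> mat2" where
  "mpow A n = ((\<lambda>B. A ** B) ^^ n) (mat 1)"

definition fuchsian :: "mat2 set \<Rightarrow> bool" where
  "fuchsian G \<longleftrightarrow> G \<subseteq> SL2 \<and> mat 1 \<in> G \<and> (\<forall>A\<in>G. \<forall>B\<in>G. A ** B \<in> G)
     \<and> (\<forall>A\<in>G. matrix_inv A \<in> G) \<and> (\<forall>K. bounded K \<longrightarrow> finite (G \<inter> K))"

text \<open>Torsion-free as a subgroup of PSL(2,R): no nontrivial element of finite order.\<close>
definition torsion_free :: "mat2 set \<Rightarrow> bool" where
  "torsion_free G \<longleftrightarrow> (\<forall>A\<in>G. \<forall>n>0. (mpow A n = mat 1 \<or> mpow A n = - mat 1)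
                          \<longrightarrow> (A = mat 1 \<or> A = - mat 1))"

definition parabolic :: "mat2 \<Rightarrow> bool" where
  "parabolic A \<longleftrightarrow> A \<in> SL2 \<and> \<bar>A$1$1 + A$2$2\<bar> = 2 \<and> A \<noteq> mat 1 \<and> A \<noteq> - mat 1"

definition moeb :: "mat2 \<Rightarrow> complex \<Rightarrow> complex" where
  "moeb A z = (of_real (A$1$1) * z + of_real (A$1$2)) / (of_real (A$2$1) * z + of_real (A$2$2))"

text \<open>Action on the boundary \<open>\<real> \<union> {\<infinity>}\<close>, with \<open>None\<close> standing for \<open>\<infinity>\<close>.\<close>
fun moeb_bd :: "mat2 \<Rightarrow> real option \<Rightarrow> real option" where
  "moeb_bd A None = (if A$2$1 = 0 then None else Some (A$1$1 / A$2$1))"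
| "moeb_bd A (Some x) = (if A$2$1 * x + A$2$2 = 0 then None
       else Some ((A$1$1 * x + A$1$2) / (A$2$1 * x + A$2$2)))"

text \<open>The horocycle centred at \<open>x \<in> \<real>\<close> with Euclidean diameter \<open>D > 0\<close>, with its
  (hyperbolic) unit-speed parametrization \<open>s \<mapsto> x - D/(s + i)\<close>, its point set and
  the open horoball it bounds.\<close>
definition horo :: "real \<Rightarrow> real \<Rightarrow> real \<Rightarrow> complex" where
  "horo x D s = of_real x - of_real D / (of_real s + \<i>)"

definition horocycle :: "real \<Rightarrow> real \<Rightarrow> complex set" where
  "horocycle x D = range (horo x D)"

definition horoball :: "real \<Rightarrow> real \<Rightarrow> complex set" where
  "horoball x D = ball (Complex x (D/2)) (D/2)"

text \<open>The signed shift of the parabolic \<open>p\<close> along the horocycle: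
  \<open>p (H(s)) = H(s + \<tau>)\<close>; the horocyclic length \<open>\<ell>(H,p)\<close> is \<open>|\<tau>|\<close>.\<close>
definition horo_shift :: "real \<Rightarrow> real \<Rightarrow> mat2 \<Rightarrow> real" where
  "horo_shift x D p = (THE \<tau>. \<forall>s. moeb p (horo x D s) = horo x D (s + \<tau>))"

definition horo_len :: "real \<Rightarrow> real \<Rightarrow> mat2 \<Rightarrow> real" where
  "horo_len x D p = \<bar>horo_shift x D p\<bar>"

text \<open>Positively oriented arc-length parametrization of the oriented pair \<open>(H,p)\<close>:
  \<open>p H\<^sup>+(s) = H\<^sup>+(s + \<ell>(H,p))\<close>.\<close>
definition horo_pos :: "real \<Rightarrow> real \<Rightarrow> mat2 \<Rightarrow> real \<Rightarrow> complex" where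
  "horo_pos x D p s = horo x D (sgn (horo_shift x D p) * s)"

text \<open>The normalized lift \<open>\<tilde>u\<close>: the unit-speed geodesic with \<open>\<tilde>u(0) = i\<close>,
  \<open>\<tilde>u(+\<infinity>) = \<infinity>\<close>, i.e. \<open>t \<mapsto> i e\<^sup>t\<close>.\<close>
definition u_tilde :: "real \<Rightarrow> complex" where
  "u_tilde t = \<i> * of_real (exp t)"

definition tangent_at :: "real \<Rightarrow> real \<Rightarrow> mat2 \<Rightarrow> real \<Rightarrow> bool" where
  "tangent_at x D p t \<longleftrightarrow> 0 \<le> t \<and> (\<exists>s0 v. u_tilde t = horo_pos x D p s0
      \<and> (u_tilde has_vector_derivative v) (at t)
      \<and> (horo_pos x D p has_vector_derivative v) (at s0))"

fun seqprod :: "(nat \<Rightarrow> mat2) \<Rightarrow> nat \<Rightarrow> mat2" where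
  "seqprod f 0 = f 0"
| "seqprod f (Suc n) = seqprod f n ** f (Suc n)"

text \<open>For a subsequence given by strictly increasing \<open>k\<close>, the points
  \<open>\<alpha>\<^sub>0 \<alpha>\<^sub>1 \<dots> \<alpha>\<^sub>n(\<infinity>)\<close> and \<open>\<xi>(\<alpha>)\<close>.\<close>
definition orbit_pt :: "(nat \<Rightarrow> mat2) \<Rightarrow> (nat \<Rightarrow> nat) \<Rightarrow> nat \<Rightarrow> real option" where
  "orbit_pt p k n = moeb_bd (seqprod (\<lambda>j. p (k j)) n) None"

definition xi :: "(nat \<Rightarrow> mat2) \<Rightarrow> (nat \<Rightarrow> nat) \<Rightarrow> real" where
  "xi p k = lim (\<lambda>n. the (orbit_pt p k n))"

end

theory Submission
  imports Defs
begin

(* A parabolic p fixing x > 0 whose horocycle is tangent to the positively oriented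
  geodesic i e^t acts on (x, \<infinity>] by z \<mapsto> x + 1/(1/(z - x) + a) with a > 0 (the sign
  of a is forced by the tangency), sending \<infinity> to x + 1/a.  So each \<alpha>\<^sub>n maps
  (x\<^sub>n, \<infinity>] increasingly into (x\<^sub>n, x\<^sub>n + 1/a\<^sub>n), and the points
  \<alpha>\<^sub>0 \<cdots> \<alpha>\<^sub>n(\<infinity>) decrease and stay above x\<^sub>0, which defines \<xi>.
  As \<ell>\<^sub>n \<rightarrow> 0 and x\<^sub>n \<rightarrow> \<infinity>, there are indices m 0 < m 1 < ... with \<ell> tiny
  along m and x (m (j+1)) > x (m j) + 1/a (m j).  The subsequence
  j \<mapsto> m (2 j + [j \<in> S]) lies in \<Sigma> for every S \<subseteq> \<nat>, and its \<xi>-value is strictly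
  increasing in S for the lexicographic order, so \<xi>(\<Sigma>) is uncountable. *)

section \<open>Boundary action of 2x2 matrices\<close>

lemma mat2_mult_nth: "((A::mat2) ** B) $ i $ j = A$i$1 * B$1$j + A$i$2 * B$2$j"
  by (simp add: matrix_matrix_mult_def sum_2)

lemma mat2_eqI:
  "(A::mat2)$1$1 = B$1$1 \<Longrightarrow> A$1$2 = B$1$2 \<Longrightarrow> A$2$1 = B$2$1 \<Longrightarrow> A$2$2 = B$2$2 \<Longrightarrow> A = B"
  by (simp add: vec_eq_iff forall_2)

definition proj_pt :: "real \<Rightarrow> real \<Rightarrow> real option" where
  "proj_pt u v = (if v = 0 then None else Some (u / v))"

lemma moeb_bd_proj_pt:
  assumes "u \<noteq> 0 \<or> v \<noteq> 0"
  shows "moeb_bd A (proj_pt u v) = proj_pt (A$1$1 * u + A$1$2 * v) (A$2$1 * u + A$2$2 * v)"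
proof (cases "v = 0")
  case True
  then show ?thesis using assms by (simp add: proj_pt_def)
next
  case False
  have "A$2$1 * (u / v) + A$2$2 = (A$2$1 * u + A$2$2 * v) / v"
    and "A$1$1 * (u / v) + A$1$2 = (A$1$1 * u + A$1$2 * v) / v"
    using False by (simp_all add: field_simps)
  then show ?thesis using False by (simp add: proj_pt_def)
qed

lemma mat2_mult_vec_nonzero:
  assumes "det (A::mat2) \<noteq> 0" "u \<noteq> 0 \<or> v \<noteq> 0"
  shows "A$1$1 * u + A$1$2 * v \<noteq> 0 \<or> A$2$1 * u + A$2$2 * v \<noteq> 0"
proof -
  have "det A * u = A$2$2 * (A$1$1 * u + A$1$2 * v) - A$1$2 * (A$2$1 * u + A$2$2 * v)"
    and "det A * v = A$1$1 * (A$2$1 * u + A$2$2 * v) - A$2$1 * (A$1$1 * u + A$1$2 * v)"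
    by (simp_all add: det_2 algebra_simps)
  then show ?thesis using assms by auto
qed

lemma moeb_bd_mult:
  assumes "det (B::mat2) \<noteq> 0"
  shows "moeb_bd (A ** B) w = moeb_bd A (moeb_bd B w)"
proof -
  obtain u v where w: "w = proj_pt u v" and uv: "u \<noteq> 0 \<or> v \<noteq> 0"
    by (cases w) (auto simp: proj_pt_def intro: that[of 1 0] that[of _ 1])
  show ?thesis
    unfolding w moeb_bd_proj_pt[OF uv] moeb_bd_proj_pt[OF mat2_mult_vec_nonzero[OF assms uv]]
    by (simp add: mat2_mult_nth algebra_simps)
qed

(* The fixed point equation gives P$1$2 = (\<mu> - a) x with \<mu> = c x + d, and then
  det P = 1 becomes \<mu>\<^sup>2 - (a + d) \<mu> + 1 = 0; trace \<plusminus>2 makes \<mu> = \<sigma> a double root. *)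
lemma parabolic_fixing_normal_form:
  assumes "parabolic P" "moeb_bd P (Some x) = Some x"
  obtains \<sigma> where "\<sigma> = 1 \<or> \<sigma> = -1" "P$1$1 = \<sigma> + P$2$1 * x" "P$1$2 = - P$2$1 * x^2"
    "P$2$2 = \<sigma> - P$2$1 * x" "P$2$1 \<noteq> 0"
proof -
  define a b c d where "a = P$1$1" "b = P$1$2" "c = P$2$1" "d = P$2$2"
  have det: "a * d - b * c = 1"
    using assms(1) by (simp add: parabolic_def SL2_def det_2 a_b_c_d_def)
  have tr: "\<bar>a + d\<bar> = 2" using assms(1) by (simp add: parabolic_def a_b_c_d_def)
  define \<mu> where "\<mu> = c * x + d"
  have "\<mu> \<noteq> 0" and "(a * x + b) / \<mu> = x"
    using assms(2) by (auto simp: \<mu>_def a_b_c_d_def split: if_splits)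
  then have b: "b = \<mu> * x - a * x" by (simp add: field_simps)
  have d: "d = \<mu> - c * x" by (simp add: \<mu>_def)
  define \<sigma> where "\<sigma> = (a + d) / 2"
  have \<sigma>: "\<sigma> = 1 \<or> \<sigma> = -1" using tr by (auto simp: \<sigma>_def abs_if split: if_splits)
  have tr_\<sigma>: "a + d = 2 * \<sigma>" by (simp add: \<sigma>_def)
  have "\<mu>^2 - (a + d) * \<mu> + 1 = 0" using det unfolding b d by (simp add: algebra_simps power2_eq_square)
  moreover have "(\<mu> - \<sigma>)^2 = \<mu>^2 - (a + d) * \<mu> + 1"
    using \<sigma> unfolding tr_\<sigma> by (auto simp: power2_eq_square algebra_simps)
  ultimately have "\<mu> = \<sigma>" by simp
  then have A: "a = \<sigma> + c * x" and B: "b = - c * x^2" and D: "d = \<sigma> - c * x"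
    using b d tr_\<sigma> by (auto simp: power2_eq_square algebra_simps)
  have "c \<noteq> 0"
  proof
    assume "c = 0"
    then have "P = (if \<sigma> = 1 then mat 1 else - mat 1)"
      using \<sigma> A B D by (intro mat2_eqI) (auto simp: mat_def a_b_c_d_def)
    then show False using assms(1) \<sigma> by (auto simp: parabolic_def split: if_splits)
  qed
  then show thesis using that[OF \<sigma>] A B D by (simp add: a_b_c_d_def)
qed

section \<open>Parabolics along a horocycle\<close>

lemma horo_inj:
  assumes "D \<noteq> 0" "horo x D s = horo x D s'"
  shows "s = s'"
proof -
  have "complex_of_real s + \<i> \<noteq> 0" "complex_of_real s' + \<i> \<noteq> 0"
    by (auto simp: complex_eq_iff)
  then have "complex_of_real s + \<i> = complex_of_real s' + \<i>"
    using assms by (simp add: horo_def field_simps)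
  then show ?thesis by (simp add: complex_eq_iff)
qed

lemma horo_shift_eqI:
  assumes "\<And>s. moeb P (horo x D s) = horo x D (s + \<tau>)" "D \<noteq> 0"
  shows "horo_shift x D P = \<tau>"
  unfolding horo_shift_def
proof (rule the_equality)
  fix \<tau>' assume "\<forall>s. moeb P (horo x D s) = horo x D (s + \<tau>')"
  then have "horo x D (0 + \<tau>') = horo x D (0 + \<tau>)" using assms(1) by metis
  then show "\<tau>' = \<tau>" using horo_inj[OF assms(2)] by simp
qed (use assms in simp)

lemma moeb_horo_normal_form:
  fixes P :: mat2
  assumes \<sigma>: "\<sigma> = 1 \<or> \<sigma> = -1" and A: "P$1$1 = \<sigma> + P$2$1 * x" and B: "P$1$2 = - P$2$1 * x^2"
    and D: "P$2$2 = \<sigma> - P$2$1 * x"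
  shows "moeb P (horo x D s) = horo x D (s - \<sigma> * P$2$1 * D)"
proof -
  define c where "c = P$2$1"
  define w where "w = complex_of_real s + \<i>"
  have w0: "w \<noteq> 0" and w1: "w - of_real (\<sigma> * c * D) \<noteq> 0"
    and w2: "of_real \<sigma> * w - of_real (c * D) \<noteq> 0"
    using \<sigma> by (auto simp: w_def complex_eq_iff)
  have "moeb P (horo x D s) = (of_real (\<sigma> + c * x) * (of_real x - of_real D / w) - of_real (c * x^2))
      / (of_real c * (of_real x - of_real D / w) + of_real (\<sigma> - c * x))"
    by (simp add: moeb_def horo_def A B D c_def w_def)
  also have "\<dots> = (of_real \<sigma> * (of_real x * w - of_real D) - of_real (c * x * D))
      / (of_real \<sigma> * w - of_real (c * D))"
    using w0 w2 by (simp add: field_simps power2_eq_square)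
  also have "\<dots> = of_real x - of_real D / (w - of_real (\<sigma> * c * D))"
    using \<sigma> w1 w2 by (auto simp: field_simps)
  finally show ?thesis by (simp add: horo_def w_def c_def)
qed

lemma horo_scaled_has_vector_derivative:
  "((\<lambda>s. horo x D (g * s)) has_vector_derivative
      of_real D * of_real g / (complex_of_real (g * s) + \<i>)^2) (at s)"
proof -
  define h where "h = (\<lambda>z. complex_of_real x - of_real D / (of_real g * z + \<i>))"
  have nz: "of_real g * of_real s + \<i> \<noteq> 0" by (auto simp: complex_eq_iff)
  have "(h has_field_derivative (of_real D * of_real g / (of_real g * of_real s + \<i>)^2)) (at (of_real s))"
    unfolding h_def using nz by (auto intro!: derivative_eq_intros simp: power2_eq_square field_simps)
  moreover have "(\<lambda>s. horo x D (g * s)) = (\<lambda>s. h (of_real s))"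
    by (auto simp: horo_def h_def)
  ultimately show ?thesis by (auto intro: has_vector_derivative_real_field)
qed

(* Matching position and velocity of i e\<^sup>t with the horocycle forces D = -2 sgn(\<tau>) x. *)
lemma tangent_at_horo_shift_neg:
  assumes "0 < x" "0 < D" "tangent_at x D P t"
  shows "horo_shift x D P < 0"
proof -
  define g where "g = sgn (horo_shift x D P)"
  define E where "E = exp t"
  obtain s0 v where pos: "u_tilde t = horo_pos x D P s0"
    and du: "(u_tilde has_vector_derivative v) (at t)"
    and dh: "(horo_pos x D P has_vector_derivative v) (at s0)"
    using assms(3) unfolding tangent_at_def by blast
  define w where "w = complex_of_real (g * s0) + \<i>"
  have w0: "w \<noteq> 0" by (auto simp: w_def complex_eq_iff)
  have "(u_tilde has_vector_derivative (\<i> * of_real E)) (at t)"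
    unfolding u_tilde_def E_def by (auto intro!: derivative_eq_intros)
  then have v1: "v = \<i> * of_real E" using vector_derivative_unique_at[OF du] by simp
  have "horo_pos x D P = (\<lambda>s. horo x D (g * s))" by (simp add: fun_eq_iff horo_pos_def g_def)
  then have "((\<lambda>s. horo x D (g * s)) has_vector_derivative v) (at s0)" using dh by simp
  then have v2: "v = of_real D * of_real g / w^2"
    using vector_derivative_unique_at[OF _ horo_scaled_has_vector_derivative] by (simp add: w_def)
  have "(of_real x - \<i> * of_real E) * w = of_real D"
    using pos w0 by (simp add: u_tilde_def horo_pos_def horo_def E_def w_def g_def field_simps)
  then have "of_real g * (of_real x - \<i> * of_real E)^2 * w^2 = of_real g * of_real D ^ 2"
    by (simp flip: power_mult_distrib)
  also have "\<dots> = \<i> * of_real E * of_real D * w^2"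
    using v1 v2 w0 by (simp add: field_simps power2_eq_square)
  finally have "\<i> * of_real E * of_real D = of_real g * (of_real x - \<i> * of_real E)^2"
    using w0 by simp
  then have "Im (\<i> * of_real E * of_real D) = Im (of_real g * (of_real x - \<i> * of_real E)^2)"
    by simp
  then have "E * (D + 2 * g * x) = 0" by (simp add: power2_eq_square algebra_simps)
  then have "D = - 2 * g * x" by (simp add: E_def)
  then have "g * x < 0" using assms(2) by simp
  then have "g < 0" using assms(1) by (simp add: mult_less_0_iff)
  then show ?thesis by (simp add: g_def sgn_if split: if_splits)
qed

(* In the coordinate 1/(z - c) this is the translation by a; it sends \<infinity> to c + 1/a. *)
definition para_map :: "real \<Rightarrow> real \<Rightarrow> real \<Rightarrow> real" where
  "para_map c a z = c + 1 / (1 / (z - c) + a)"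

lemma parabolic_boundary_action:
  assumes "parabolic P" "moeb_bd P (Some x) = Some x" "0 < x" "0 < D" "tangent_at x D P t"
  obtains a where "0 < a" "moeb_bd P None = Some (x + 1 / a)"
    "\<And>z. x < z \<Longrightarrow> moeb_bd P (Some z) = Some (para_map x a z)"
proof -
  obtain \<sigma> where \<sigma>: "\<sigma> = 1 \<or> \<sigma> = -1" and A: "P$1$1 = \<sigma> + P$2$1 * x"
    and B: "P$1$2 = - P$2$1 * x^2" and D: "P$2$2 = \<sigma> - P$2$1 * x" and c0: "P$2$1 \<noteq> 0"
    using parabolic_fixing_normal_form[OF assms(1,2)] by metis
  define a where "a = \<sigma> * P$2$1"
  have "horo_shift x D P = - a * D"
    using horo_shift_eqI[of P x D "- a * D"] moeb_horo_normal_form[OF \<sigma> A B D] assms(4)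
    by (simp add: a_def)
  then have "0 < a" using tangent_at_horo_shift_neg[OF assms(3-5)] assms(4)
    by (simp add: zero_less_mult_iff)
  moreover have "moeb_bd P None = Some (x + 1 / a)" using \<sigma> c0 A by (auto simp: a_def field_simps)
  moreover have "moeb_bd P (Some z) = Some (para_map x a z)" if "x < z" for z
  proof -
    have pos: "0 < 1 + a * (z - x)" using \<open>0 < a\<close> that by (simp add: add_pos_pos)
    have den: "P$2$1 * z + P$2$2 = \<sigma> * (1 + a * (z - x))"
      and num: "P$1$1 * z + P$1$2 = \<sigma> * x * (1 + a * (z - x)) + \<sigma> * (z - x)"
      using \<sigma> A B D by (auto simp: a_def algebra_simps power2_eq_square)
    have "(P$1$1 * z + P$1$2) / (P$2$1 * z + P$2$2) = x + (z - x) / (1 + a * (z - x))"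
      unfolding den num using \<sigma> pos by (auto simp: field_simps)
    also have "\<dots> = para_map x a z" using that pos by (simp add: para_map_def field_simps)
    finally show ?thesis using den pos \<sigma> by auto
  qed
  ultimately show thesis using that by blast
qed

section \<open>Iterating the boundary maps\<close>

lemma para_map_denom_pos: "0 < (a::real) \<Longrightarrow> c < z \<Longrightarrow> 0 < 1 / (z - c) + a"
  by (intro add_pos_pos) simp_all

lemma para_map_bounds:
  assumes "0 < a" "c < z"
  shows "c < para_map c a z" "para_map c a z < c + 1 / a"
proof -
  have pos: "0 < 1 / (z - c) + a" and "a < 1 / (z - c) + a"
    using para_map_denom_pos[OF assms] assms(2) by simp_all
  then have "1 / (1 / (z - c) + a) < 1 / a"
    using divide_strict_left_mono[OF _ zero_less_one mult_pos_pos[OF pos assms(1)]] by blast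
  then show "c < para_map c a z" "para_map c a z < c + 1 / a"
    using pos by (simp_all add: para_map_def)
qed

lemma para_map_strict_mono:
  assumes "0 < a" "c < z" "z < z'"
  shows "para_map c a z < para_map c a z'"
proof -
  have less: "1 / (z' - c) < 1 / (z - c)" using assms by (simp add: divide_strict_left_mono)
  have "1 / (1 / (z - c) + a) < 1 / (1 / (z' - c) + a)"
    using less para_map_denom_pos[OF assms(1)] assms(2,3)
    by (intro divide_strict_left_mono) (auto intro: mult_pos_pos)
  then show ?thesis by (simp add: para_map_def)
qed

lemma isCont_para_map:
  assumes "0 < a" "c < z"
  shows "isCont (para_map c a) z"
  unfolding para_map_def using para_map_denom_pos[OF assms] assms(2)
  by (auto intro!: continuous_intros)

fun para_comp :: "(nat \<Rightarrow> real) \<Rightarrow> (nat \<Rightarrow> real) \<Rightarrow> nat \<Rightarrow> real \<Rightarrow> real" where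
  "para_comp c a 0 z = z"
| "para_comp c a (Suc n) z = para_comp c a n (para_map (c n) (a n) z)"

(* The image of \<infinity> under the first n + 1 maps. *)
definition para_orbit :: "(nat \<Rightarrow> real) \<Rightarrow> (nat \<Rightarrow> real) \<Rightarrow> nat \<Rightarrow> real" where
  "para_orbit c a n = para_comp c a n (c n + 1 / a n)"

context
  fixes c a :: "nat \<Rightarrow> real"
  assumes c: "strict_mono c" and a: "\<And>j. 0 < a j"
begin

lemma para_map_infty_gt_earlier:
  assumes "i \<le> n"
  shows "c i < c n + 1 / a n"
proof -
  have "0 < 1 / a n" using a[of n] by simp
  then show ?thesis using strict_mono_less_eq[OF c, of i n] assms by linarith
qed

lemma para_map_gt_earlier:
  assumes "c n < z" "i \<le> n"
  shows "c i < para_map (c n) (a n) z"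
  using strict_mono_less_eq[OF c, of i n] para_map_bounds(1)[OF a[of n] assms(1)] assms(2)
  by linarith

lemma para_comp_strict_mono:
  "\<forall>i<n. c i < z \<Longrightarrow> z < z' \<Longrightarrow> para_comp c a n z < para_comp c a n z'"
proof (induction n arbitrary: z z')
  case (Suc n)
  then show ?case
    using para_map_gt_earlier para_map_strict_mono[OF a[of n]] by simp
qed simp

lemma para_comp_gt: "\<forall>i\<le>n. c i < z \<Longrightarrow> c 0 < para_comp c a n z"
proof (induction n arbitrary: z)
  case (Suc n)
  then show ?case using para_map_gt_earlier by simp
qed simp

lemma isCont_para_comp: "\<forall>i<n. c i < z \<Longrightarrow> isCont (para_comp c a n) z"
proof (induction n arbitrary: z)
  case (Suc n)
  then have "isCont (para_comp c a n) (para_map (c n) (a n) z)"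
    using para_map_gt_earlier by simp
  moreover have "c n < z" using Suc.prems by simp
  ultimately show ?case using isCont_o2[OF isCont_para_map[OF a[of n]]] by simp
next
  case 0
  have "para_comp c a 0 = (\<lambda>z. z)" by (simp add: fun_eq_iff)
  then show ?case by simp
qed

lemma para_orbit_gt: "c 0 < para_orbit c a n"
  unfolding para_orbit_def by (rule para_comp_gt) (use para_map_infty_gt_earlier in blast)

lemma para_orbit_decseq: "decseq (para_orbit c a)"
proof (rule decseq_SucI)
  fix n
  define z where "z = para_map (c n) (a n) (c (Suc n) + 1 / a (Suc n))"
  have "c n < c (Suc n) + 1 / a (Suc n)" using para_map_infty_gt_earlier by simp
  then have "z < c n + 1 / a n" and "\<forall>i<n. c i < z"
    unfolding z_def using para_map_bounds(2)[OF a] para_map_gt_earlier by simp_all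
  then have "para_comp c a n z < para_comp c a n (c n + 1 / a n)"
    by (rule para_comp_strict_mono[rotated])
  then show "para_orbit c a (Suc n) \<le> para_orbit c a n"
    by (simp add: para_orbit_def z_def)
qed

lemma para_orbit_converges:
  obtains L where "para_orbit c a \<longlonglongrightarrow> L" "c 0 \<le> L" "L \<le> c 0 + 1 / a 0"
proof -
  have "\<forall>n. c 0 \<le> para_orbit c a n" using para_orbit_gt less_imp_le by blast
  moreover obtain L where L: "para_orbit c a \<longlonglongrightarrow> L" "\<forall>n. L \<le> para_orbit c a n"
    using decseq_convergent[OF para_orbit_decseq] calculation by blast
  ultimately have "c 0 \<le> L" using LIMSEQ_le_const[OF L(1)] by blast
  moreover have "L \<le> c 0 + 1 / a 0" using spec[OF L(2), of 0] by (simp add: para_orbit_def)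
  ultimately show thesis by (rule that[OF L(1)])
qed

end

lemma para_comp_add:
  "para_comp c a (j + n) z = para_comp c a j (para_comp (\<lambda>i. c (j + i)) (\<lambda>i. a (j + i)) n z)"
  by (induction n arbitrary: z) auto

lemma para_orbit_add:
  "para_orbit c a (j + n) = para_comp c a j (para_orbit (\<lambda>i. c (j + i)) (\<lambda>i. a (j + i)) n)"
  by (simp add: para_orbit_def para_comp_add)

lemma para_comp_cong: "\<forall>i<j. c i = c' i \<and> a i = a' i \<Longrightarrow> para_comp c a j = para_comp c' a' j"
  by (induction j) (simp_all add: fun_eq_iff)

lemma strict_mono_less_if_le:
  fixes f :: "nat \<Rightarrow> 'a :: order"
  assumes "strict_mono f" "f j \<le> y" "i < j"
  shows "f i < y"
  using strict_monoD[OF assms(1,3)] assms(2) by (rule less_le_trans)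

lemma para_orbit_tendsto_shift:
  assumes c: "strict_mono c" and a: "\<And>j. 0 < a j"
  obtains L where "para_orbit c a \<longlonglongrightarrow> para_comp c a j L" "c j \<le> L" "L \<le> c j + 1 / a j"
proof -
  have "strict_mono (\<lambda>i. c (j + i))" using c by (simp add: strict_mono_def)
  then obtain L where L: "para_orbit (\<lambda>i. c (j + i)) (\<lambda>i. a (j + i)) \<longlonglongrightarrow> L"
    "c j \<le> L" "L \<le> c j + 1 / a j"
    using para_orbit_converges[of "\<lambda>i. c (j + i)" "\<lambda>i. a (j + i)"] a by auto
  have "\<forall>i<j. c i < L" using strict_mono_less_if_le[OF c L(2)] by blast
  then have "isCont (para_comp c a j) L" by (rule isCont_para_comp[of c a, OF c a])
  then have "(\<lambda>n. para_comp c a j (para_orbit (\<lambda>i. c (j + i)) (\<lambda>i. a (j + i)) n))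
      \<longlonglongrightarrow> para_comp c a j L"
    using L(1) by (rule isCont_tendsto_compose)
  then have "(\<lambda>n. para_orbit c a (n + j)) \<longlonglongrightarrow> para_comp c a j L"
    by (simp only: add.commute[of _ j] para_orbit_add)
  then show thesis using that L(2,3) LIMSEQ_offset by blast
qed

(* After the common prefix, the first limit lies in (c j, c j + 1/a j] and the second
  beyond c' j; the common prefix maps are increasing. *)
lemma lim_para_orbit_less:
  assumes c: "strict_mono c" "strict_mono c'" and a: "\<And>j. 0 < a j" "\<And>j. 0 < a' j"
    and prefix: "\<forall>i<j. c i = c' i \<and> a i = a' i" and gap: "c j + 1 / a j < c' j"
  shows "lim (para_orbit c a) < lim (para_orbit c' a')"
proof -
  obtain L where L: "para_orbit c a \<longlonglongrightarrow> para_comp c a j L" "c j \<le> L" "L \<le> c j + 1 / a j"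
    using para_orbit_tendsto_shift[of c a, OF c(1) a(1)] by blast
  obtain L' where L': "para_orbit c' a' \<longlonglongrightarrow> para_comp c' a' j L'" "c' j \<le> L'"
    using para_orbit_tendsto_shift[of c' a', OF c(2) a(2)] by blast
  have "\<forall>i<j. c i < L" using strict_mono_less_if_le[OF c(1) L(2)] by blast
  moreover have "L < L'" using L(3) L'(2) gap by linarith
  ultimately have "para_comp c a j L < para_comp c a j L'"
    by (rule para_comp_strict_mono[of c a, OF c(1) a(1)])
  then show ?thesis using limI[OF L(1)] limI[OF L'(1)] para_comp_cong[OF prefix] by simp
qed

section \<open>Orbits of products of parabolics\<close>

context
  fixes q :: "nat \<Rightarrow> mat2" and c a :: "nat \<Rightarrow> real"
  assumes det: "\<And>j. det (q j) = 1" and c: "strict_mono c" and a: "\<And>j. 0 < a j"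
    and q_Some: "\<And>j z. c j < z \<Longrightarrow> moeb_bd (q j) (Some z) = Some (para_map (c j) (a j) z)"
    and q_None: "\<And>j. moeb_bd (q j) None = Some (c j + 1 / a j)"
begin

lemma moeb_bd_seqprod_Some:
  "c n < z \<Longrightarrow> moeb_bd (seqprod q n) (Some z) = Some (para_comp c a (Suc n) z)"
proof (induction n arbitrary: z)
  case (Suc n)
  have "c n < para_map (c (Suc n)) (a (Suc n)) z"
    using para_map_gt_earlier[of c a, OF c a Suc.prems] by simp
  then show ?case
    using Suc by (simp add: moeb_bd_mult det q_Some del: moeb_bd.simps)
qed (simp add: q_Some del: moeb_bd.simps)

lemma moeb_bd_seqprod_None: "moeb_bd (seqprod q n) None = Some (para_orbit c a n)"
proof (cases n)
  case (Suc m)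
  have "c m < c n + 1 / a n" using para_map_infty_gt_earlier[of c a, OF c a, of m n] Suc by simp
  then show ?thesis
    using Suc by (simp add: moeb_bd_mult det q_None moeb_bd_seqprod_Some para_orbit_def del: moeb_bd.simps)
qed (simp add: q_None para_orbit_def del: moeb_bd.simps)

end

lemma orbit_pt_as_para_orbit:
  assumes "\<And>n. parabolic (p n)" "\<And>n. moeb_bd (p n) (Some (x n)) = Some (x n)" "\<And>n. 0 < x n"
    and "\<And>n. 0 < D n" "\<And>n. tangent_at (x n) (D n) (p n) (t n)" "strict_mono x"
  obtains a where "\<And>n. 0 < a n"
    "\<And>k n. strict_mono k \<Longrightarrow> orbit_pt p k n = Some (para_orbit (x \<circ> k) (a \<circ> k) n)"
proof -
  have "\<exists>a. \<forall>n. 0 < a n \<and> moeb_bd (p n) None = Some (x n + 1 / a n)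
      \<and> (\<forall>z. x n < z \<longrightarrow> moeb_bd (p n) (Some z) = Some (para_map (x n) (a n) z))"
  proof (rule choice, rule allI)
    fix n
    show "\<exists>a. 0 < a \<and> moeb_bd (p n) None = Some (x n + 1 / a)
        \<and> (\<forall>z. x n < z \<longrightarrow> moeb_bd (p n) (Some z) = Some (para_map (x n) a z))"
      by (rule parabolic_boundary_action[OF assms(1-5)]) blast
  qed
  then obtain a where a: "\<And>n. 0 < a n"
    and boundary: "\<And>n. moeb_bd (p n) None = Some (x n + 1 / a n)"
      "\<And>n z. x n < z \<Longrightarrow> moeb_bd (p n) (Some z) = Some (para_map (x n) (a n) z)"
    by blast
  have det: "det (p n) = 1" for n using assms(1) by (simp add: parabolic_def SL2_def)
  have "orbit_pt p k n = Some (para_orbit (x \<circ> k) (a \<circ> k) n)" if "strict_mono k" for k n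
    unfolding orbit_pt_def
    by (rule moeb_bd_seqprod_None)
      (simp_all add: det a boundary strict_mono_o[OF assms(6) that] del: moeb_bd.simps)
  with a show thesis by (rule that)
qed

section \<open>Uncountably many limits\<close>

lemma uncountable_UNIV_nat_set: "uncountable (UNIV :: nat set set)"
proof
  assume "countable (UNIV :: nat set set)"
  then have "range (from_nat_into (UNIV :: nat set set)) = Pow UNIV"
    by (simp add: range_from_nat_into)
  then show False using Cantors_theorem by blast
qed

lemma uncountable_range_lex_strict_mono:
  fixes f :: "nat set \<Rightarrow> 'a :: linorder"
  assumes lex: "\<And>S T j. j \<notin> S \<Longrightarrow> j \<in> T \<Longrightarrow> \<forall>i<j. i \<in> S \<longleftrightarrow> i \<in> T \<Longrightarrow> f S < f T"
  shows "uncountable (range f)"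
proof -
  have "inj f"
  proof (rule injI, rule ccontr)
    fix S T assume eq: "f S = f T" and "S \<noteq> T"
    then have ex: "\<exists>j. (j \<in> S) \<noteq> (j \<in> T)" by (simp add: set_eq_iff)
    define j where "j = (LEAST j. (j \<in> S) \<noteq> (j \<in> T))"
    have differ: "(j \<in> S) \<noteq> (j \<in> T)" unfolding j_def by (rule LeastI_ex[OF ex])
    have prefix: "\<forall>i<j. i \<in> S \<longleftrightarrow> i \<in> T" unfolding j_def using not_less_Least by blast
    show False
    proof (cases "j \<in> S")
      case True
      then have "f T < f S" using differ prefix by (intro lex) auto
      with eq show False by simp
    next
      case False
      then have "f S < f T" using differ prefix by (intro lex) auto
      with eq show False by simp
    qed
  qed
  then show ?thesis using countable_image_inj_on[OF _ \<open>inj f\<close>] uncountable_UNIV_nat_set by blast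
qed

lemma uncountable_lim_para_orbits:
  fixes x a :: "nat \<Rightarrow> real" and P :: "nat \<Rightarrow> nat \<Rightarrow> bool"
  assumes x: "strict_mono x" "filterlim x at_top sequentially" and a: "\<And>n. 0 < a n"
    and P: "\<And>j. eventually (P j) sequentially" "\<And>i j n. j \<le> i \<Longrightarrow> P i n \<Longrightarrow> P j n"
  shows "uncountable ((\<lambda>k. lim (para_orbit (x \<circ> k) (a \<circ> k))) ` {k. strict_mono k \<and> (\<forall>j. P j (k j))})"
    (is "uncountable (?lim ` ?\<Sigma>)")
proof -
  have "\<exists>m. \<forall>j. P j (m j) \<and> m j < m (Suc j) \<and> x (m j) + 1 / a (m j) < x (m (Suc j))"
  proof (rule dependent_nat_choice)
    show "\<exists>N. P 0 N" using eventually_happens'[OF sequentially_bot P(1)] .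
    fix N j
    have "eventually (\<lambda>N'. x N + 1 / a N < x N') sequentially"
      using x(2) by (simp add: filterlim_at_top_dense)
    then have "eventually (\<lambda>N'. P (Suc j) N' \<and> N < N' \<and> x N + 1 / a N < x N') sequentially"
      by (intro eventually_conj P(1) eventually_gt_at_top)
    then show "\<exists>N'. P (Suc j) N' \<and> N < N' \<and> x N + 1 / a N < x N'"
      by (rule eventually_happens'[OF sequentially_bot])
  qed
  then obtain m where m: "\<And>j. P j (m j)" "\<And>j. m j < m (Suc j)"
    "\<And>j. x (m j) + 1 / a (m j) < x (m (Suc j))"
    by blast
  then have "strict_mono m" by (simp add: strict_mono_Suc_iff)
  define sub where "sub S j = m (2 * j + (if j \<in> S then 1 else 0))" for S j
  have sub_mono: "strict_mono (sub S)" for S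
    unfolding strict_mono_Suc_iff sub_def by (simp add: strict_mono_less[OF \<open>strict_mono m\<close>])
  have x_sub_mono: "strict_mono (x \<circ> sub S)" for S
    using strict_mono_o[OF x(1) sub_mono] .
  have "P j (sub S j)" for S j
    unfolding sub_def by (rule P(2)[OF _ m(1)]) simp
  with sub_mono have sub_in: "sub S \<in> ?\<Sigma>" for S by blast
  have "uncountable (range (\<lambda>S. ?lim (sub S)))"
  proof (rule uncountable_range_lex_strict_mono)
    fix S T :: "nat set" and j assume "j \<notin> S" "j \<in> T" and prefix: "\<forall>i<j. i \<in> S \<longleftrightarrow> i \<in> T"
    then have "sub S j = m (2 * j)" "sub T j = m (Suc (2 * j))" by (simp_all add: sub_def)
    then have "(x \<circ> sub S) j + 1 / (a \<circ> sub S) j < (x \<circ> sub T) j" using m(3) by simp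
    moreover have "\<forall>i<j. (x \<circ> sub S) i = (x \<circ> sub T) i \<and> (a \<circ> sub S) i = (a \<circ> sub T) i"
      using prefix by (simp add: sub_def)
    ultimately show "?lim (sub S) < ?lim (sub T)"
      by (intro lim_para_orbit_less[OF x_sub_mono x_sub_mono]) (simp_all add: a)
  qed
  moreover have "range (\<lambda>S. ?lim (sub S)) \<subseteq> ?lim ` ?\<Sigma>" using sub_in by blast
  ultimately show ?thesis using countable_subset by blast
qed

theorem mainTheorem11:
  fixes G :: "mat2 set" and p :: "nat \<Rightarrow> mat2" and x D t :: "nat \<Rightarrow> real"
    and \<epsilon> :: real and Sigma :: "(nat \<Rightarrow> nat) set"
  assumes "fuchsian G" and "torsion_free G"
    and "\<And>n. p n \<in> G" and "\<And>n. parabolic (p n)"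
    and "\<And>n. moeb_bd (p n) (Some (x n)) = Some (x n)"
    and "\<And>n. D n > 0"
    and "\<And>n. moeb (p n) ` horocycle (x n) (D n) = horocycle (x n) (D n)"
    and "\<And>n. tangent_at (x n) (D n) (p n) (t n)"
    and "\<And>n. 0 \<le> t n" and "mono t" and "filterlim t at_top sequentially"
    and "\<And>n. 0 < x n" and "strict_mono x" and "filterlim x at_top sequentially"
    and "\<And>m n. m \<noteq> n \<Longrightarrow> horoball (x m) (D m) \<inter> horoball (x n) (D n) = {}"
    and "(\<lambda>n. horo_len (x n) (D n) (p n)) \<longlonglongrightarrow> 0"
    and "\<epsilon> > 0"
    and "Sigma = {k. strict_mono k \<and>
           (\<forall>n. horo_len (x (k n)) (D (k n)) (p (k n)) < (1/12) * (\<epsilon> / 4 ^ n))}"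
  shows "(\<forall>k\<in>Sigma. (\<forall>\<^sub>F n in sequentially. orbit_pt p k n \<noteq> None)
            \<and> (\<lambda>n. the (orbit_pt p k n)) \<longlonglongrightarrow> xi p k \<and> xi p k > 0)
         \<and> uncountable (xi p ` Sigma)"
proof -
  obtain a where a: "\<And>n. 0 < a n"
    and orbit: "\<And>k n. strict_mono k \<Longrightarrow> orbit_pt p k n = Some (para_orbit (x \<circ> k) (a \<circ> k) n)"
    using orbit_pt_as_para_orbit[OF assms(4,5,12,6,8,13)] by blast
  have xi: "xi p k = lim (para_orbit (x \<circ> k) (a \<circ> k))" if "strict_mono k" for k
    by (simp add: xi_def orbit[OF that])
  have "(\<forall>\<^sub>F n in sequentially. orbit_pt p k n \<noteq> None)
      \<and> (\<lambda>n. the (orbit_pt p k n)) \<longlonglongrightarrow> xi p k \<and> xi p k > 0" if k: "strict_mono k" for k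
  proof -
    obtain L where L: "para_orbit (x \<circ> k) (a \<circ> k) \<longlonglongrightarrow> L" "x (k 0) \<le> L"
      using para_orbit_converges[OF strict_mono_o[OF assms(13) k], of "a \<circ> k"] a by auto
    then show ?thesis using limI[OF L(1)] assms(12)[of "k 0"] by (simp add: orbit[OF k] xi[OF k])
  qed
  moreover have "uncountable ((\<lambda>k. lim (para_orbit (x \<circ> k) (a \<circ> k))) ` Sigma)"
    unfolding assms(18)
  proof (rule uncountable_lim_para_orbits[OF assms(13,14) a])
    fix j
    show "eventually (\<lambda>n. horo_len (x n) (D n) (p n) < 1 / 12 * (\<epsilon> / 4 ^ j)) sequentially"
      using order_tendstoD(2)[OF assms(16)] assms(17) by simp
  next
    fix i j n :: nat assume "j \<le> i"
    then have "\<epsilon> / 4 ^ i \<le> \<epsilon> / 4 ^ j"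
      using assms(17) by (intro divide_left_mono power_increasing) simp_all
    then show "horo_len (x n) (D n) (p n) < 1 / 12 * (\<epsilon> / 4 ^ i) \<Longrightarrow>
        horo_len (x n) (D n) (p n) < 1 / 12 * (\<epsilon> / 4 ^ j)" by simp
  qed
  moreover have "xi p ` Sigma = (\<lambda>k. lim (para_orbit (x \<circ> k) (a \<circ> k))) ` Sigma"
    using assms(18) xi by (intro image_cong) auto
  ultimately show ?thesis using assms(18) by auto
qed

end
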